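(* Let $(X,d)$ be a proper geodesic metric space with a distinguished base point $0$, and let $(x_n)$ and $(y_n)$ be sequences in $X$ which both converge to the same point $\omega\in\partial_d X$ of the metric boundary. Then $\lim_{n\to\infty}(x_n\cdot y_n)=\infty$.
   Context: A metric space is proper if closed bounded sets are compact, and geodesic if any two points $x,y$ are joined by an isometric image of $[0,d(x,y)]$. The Gromov product with respect to the base point $0$ is $(x\cdot y)=\tfrac12\big(d(x,0)+d(y,0)-d(x,y)\big)$. For $y\in X$ let $\varphi_y(x)=d(x,0)-d(x,y)$. The metric compactification $\overline{X}^d$ is the maximal ideal space of the commutative unital C*-algebra generated by the continuous functions vanishing at infinity on $X$, the constants, and the functions $\varphi_y$ ($y\in X$); the metric boundary is $\partial_d X=\overline{X}^d\setminus X$. Concretely, a sequence $(x_n)$ in $X$ converges to a point of $\partial_d X$ iff it eventually leaves every compact subset of $X$ and $\varphi_y(x_n)$ converges for every $y\in X$; two such sequences converge to the same boundary point iff the limits of $\varphi_z$ along them agree for every $z\in X$. *)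

theory Defs
  imports "HOL-Analysis.Analysis"
begin

text \<open>The space X is the whole carrier of a metric-space type 'a.\<close>

definition proper_space :: "'a::metric_space itself \<Rightarrow> bool" where
  "proper_space _ \<longleftrightarrow> (\<forall>S::'a set. closed S \<and> bounded S \<longrightarrow> compact S)"

definition geodesic_space :: "'a::metric_space itself \<Rightarrow> bool" where
  "geodesic_space _ \<longleftrightarrow> (\<forall>x y::'a. \<exists>\<gamma>::real \<Rightarrow> 'a.
      \<gamma> 0 = x \<and> \<gamma> (dist x y) = y \<and>
      (\<forall>s\<in>{0..dist x y}. \<forall>t\<in>{0..dist x y}. dist (\<gamma> s) (\<gamma> t) = \<bar>s - t\<bar>))"

definition gromov_product :: "'a::metric_space \<Rightarrow> 'a \<Rightarrow> 'a \<Rightarrow> real" where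
  "gromov_product b x y = (dist x b + dist y b - dist x y) / 2"

definition phi :: "'a::metric_space \<Rightarrow> 'a \<Rightarrow> 'a \<Rightarrow> real" where
  "phi b y x = dist x b - dist x y"

text \<open>A boundary point of the metric compactification is identified by the values
  it assigns to the generating functions phi_z; a sequence converges to the boundary
  point omega iff it eventually leaves every compact set and phi_z(x_n) tends to omega z
  for every z.\<close>
definition converges_to_boundary :: "'a::metric_space \<Rightarrow> (nat \<Rightarrow> 'a) \<Rightarrow> ('a \<Rightarrow> real) \<Rightarrow> bool" where
  "converges_to_boundary b x \<omega> \<longleftrightarrow>
     (\<forall>K. compact K \<longrightarrow> (\<forall>\<^sub>F n in sequentially. x n \<notin> K)) \<and>
     (\<forall>z. (\<lambda>n. phi b z (x n)) \<longlonglongrightarrow> \<omega> z)"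

end

theory Submission
  imports Defs
begin

text \<open>A boundary point \<omega>, seen as the function z \<mapsto> lim phi_z(x_n), is unbounded above:
  walking the distance R from the base point towards x_n along a geodesic gives points z_n
  with phi_{z_n}(x_n) = R; by properness they accumulate at some l, and since phi_z is
  1-Lipschitz in z we get \<omega>(l) \<ge> R. On the other hand the triangle inequality through l gives
  (x\<cdot>y) \<ge> (phi_l(x) + phi_l(y))/2, and along (x_n, y_n) both terms tend to \<omega>(l).\<close>

lemma phi_add_le_gromov_product:
  "(phi b l x + phi b l y) / 2 \<le> gromov_product b x y"
proof -
  have "dist x y \<le> dist x l + dist y l"
    using dist_triangle[of x y l] by (simp add: dist_commute)
  then show ?thesis
    unfolding gromov_product_def phi_def by simp
qed

lemma phi_sub_dist_le: "phi b z x - dist z l \<le> phi b l x"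
  using dist_triangle[of x l z] unfolding phi_def by (simp add: dist_commute)

lemma geodesic_space_point_between:
  fixes x y :: "'a::metric_space"
  assumes "geodesic_space TYPE('a)" and "0 \<le> r" and "r \<le> dist x y"
  obtains z where "dist x z = r" and "dist z y = dist x y - r"
proof -
  obtain \<gamma> :: "real \<Rightarrow> 'a" where
    ends: "\<gamma> 0 = x" "\<gamma> (dist x y) = y" and
    isom: "\<forall>s\<in>{0..dist x y}. \<forall>t\<in>{0..dist x y}. dist (\<gamma> s) (\<gamma> t) = \<bar>s - t\<bar>"
    using assms(1) unfolding geodesic_space_def by blast
  have "dist (\<gamma> 0) (\<gamma> r) = r" "dist (\<gamma> r) (\<gamma> (dist x y)) = dist x y - r"
    using isom assms(2,3) by auto
  then have "dist x (\<gamma> r) = r" "dist (\<gamma> r) y = dist x y - r"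
    by (simp_all only: ends)
  then show thesis by (rule that)
qed

lemma converges_to_boundary_value_ge:
  fixes b :: "'a::metric_space" and x :: "nat \<Rightarrow> 'a" and \<omega> :: "'a \<Rightarrow> real"
  assumes proper: "proper_space TYPE('a)" and geodesic: "geodesic_space TYPE('a)"
    and conv: "converges_to_boundary b x \<omega>" and "0 \<le> R"
  obtains l where "R \<le> \<omega> l"
proof -
  define D where "D n = min R (dist b (x n))" for n
  have "\<exists>z. dist b z = D n \<and> phi b z (x n) = D n" for n
  proof -
    have "0 \<le> D n" and "D n \<le> dist b (x n)"
      using \<open>0 \<le> R\<close> by (simp_all add: D_def)
    then obtain z where "dist b z = D n" and "dist z (x n) = dist b (x n) - D n"
      by (rule geodesic_space_point_between[OF geodesic])
    moreover from this have "phi b z (x n) = D n"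
      using dist_commute[of "x n" b] dist_commute[of "x n" z] unfolding phi_def by linarith
    ultimately show ?thesis
      by blast
  qed
  then obtain z where z_dist: "\<And>n. dist b (z n) = D n" and phi_z: "\<And>n. phi b (z n) (x n) = D n"
    by metis
  have compact_ball: "compact (cball b R)"
    using proper unfolding proper_space_def by simp
  have "\<forall>n. z n \<in> cball b R"
    using z_dist by (simp add: D_def)
  then obtain l r where "strict_mono (r :: nat \<Rightarrow> nat)" and z_lim: "(z \<circ> r) \<longlonglongrightarrow> l"
    using seq_compactE[OF compact_imp_seq_compact[OF compact_ball]] by blast
  have "\<forall>\<^sub>F n in sequentially. x n \<notin> cball b R"
    using conv compact_ball unfolding converges_to_boundary_def by blast
  then have "\<forall>\<^sub>F n in sequentially. D n = R"
    by eventually_elim (simp add: D_def)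
  then have "D \<longlonglongrightarrow> R"
    by (rule tendsto_eventually)
  then have "(\<lambda>n. D (r n)) \<longlonglongrightarrow> R"
    using LIMSEQ_subseq_LIMSEQ[OF _ \<open>strict_mono r\<close>] by (simp add: comp_def)
  moreover have "(\<lambda>n. dist (z (r n)) l) \<longlonglongrightarrow> 0"
    using z_lim unfolding comp_def by (rule tendsto_dist_iff[THEN iffD1])
  ultimately have lower: "(\<lambda>n. D (r n) - dist (z (r n)) l) \<longlonglongrightarrow> R - 0"
    by (rule tendsto_diff)
  have "(\<lambda>n. phi b l (x n)) \<longlonglongrightarrow> \<omega> l"
    using conv unfolding converges_to_boundary_def by blast
  then have upper: "(\<lambda>n. phi b l (x (r n))) \<longlonglongrightarrow> \<omega> l"
    using LIMSEQ_subseq_LIMSEQ[OF _ \<open>strict_mono r\<close>] by (simp add: comp_def)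
  have "D (r n) - dist (z (r n)) l \<le> phi b l (x (r n))" for n
    using phi_sub_dist_le[of b "z (r n)" "x (r n)" l] by (simp add: phi_z)
  then have "R - 0 \<le> \<omega> l"
    by (intro tendsto_le[OF _ upper lower]) simp_all
  then show thesis using that by simp
qed

theorem mainTheorem3:
  fixes b :: "'a::metric_space"
    and x y :: "nat \<Rightarrow> 'a"
    and \<omega> :: "'a \<Rightarrow> real"
  assumes "proper_space TYPE('a)"
    and "geodesic_space TYPE('a)"
    and "converges_to_boundary b x \<omega>"
    and "converges_to_boundary b y \<omega>"
  shows "filterlim (\<lambda>n. gromov_product b (x n) (y n)) at_top sequentially"
  unfolding filterlim_at_top_dense
proof
  fix Z :: real
  have "0 \<le> max Z 0 + 1"
    by simp
  then obtain l where "max Z 0 + 1 \<le> \<omega> l"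
    by (rule converges_to_boundary_value_ge[OF assms(1-3)])
  have "(\<lambda>n. phi b l (x n)) \<longlonglongrightarrow> \<omega> l" and "(\<lambda>n. phi b l (y n)) \<longlonglongrightarrow> \<omega> l"
    using assms(3,4) unfolding converges_to_boundary_def by auto
  then have "(\<lambda>n. (phi b l (x n) + phi b l (y n)) / 2) \<longlonglongrightarrow> (\<omega> l + \<omega> l) / 2"
    by (intro tendsto_divide tendsto_add) simp_all
  moreover have "Z < (\<omega> l + \<omega> l) / 2"
    using \<open>max Z 0 + 1 \<le> \<omega> l\<close> by (simp add: max_def split: if_splits)
  ultimately have "\<forall>\<^sub>F n in sequentially. Z < (phi b l (x n) + phi b l (y n)) / 2"
    by (rule order_tendstoD(1))
  then show "\<forall>\<^sub>F n in sequentially. Z < gromov_product b (x n) (y n)"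
    by eventually_elim (rule less_le_trans[OF _ phi_add_le_gromov_product[of b l]])
qed

end
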